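(* For all integers $n,k_1,k_2\geq 2$, one has $\mathsf{Cube}_{n,k_1}\Rightarrow_{\mathsf{lex}}\mathsf{Cube}_{n,k_2}$ and $\mathsf{Cube}_{n,k_2}\Rightarrow_{\mathsf{lex}}\mathsf{Cube}_{n,k_1}$; i.e., a finitely complete category has $\mathsf{Cube}_{n,k_1}$-closed relations if and only if it has $\mathsf{Cube}_{n,k_2}$-closed relations.
   Context: A simple extended matrix $M$ (with parameters $n\geq 1$, $m\geq 0$, $k\geq 1$) is an $n\times(m+1)$ array $\left[ x_{ij} \mid y_i\right]$ whose entries $x_{ij}$ ($1\le i\le n$, $1\le j\le m$) and $y_i$ are (not necessarily distinct) variables from $\{x_1,\dots,x_k\}$; the first $m$ columns are the left columns and the last column is the right column. In a finitely complete category $\mathbb{C}$, an internal $n$-ary relation $r\colon R\rightarrowtail A^n$ (a monomorphism) is $M$-closed if for every object $B$ and every function $f\colon\{x_1,\dots,x_k\}\to\mathbb{C}(B,A)$ such that, for each $j\in\{1,\dots,m\}$, the morphism $(f(x_{1j}),\dots,f(x_{nj}))\colon B\to A^n$ factors through $r$, the morphism $(f(y_1),\dots,f(y_n))\colon B\to A^n$ also factors through $r$. $\mathbb{C}$ has $M$-closed relations if every internal $n$-ary relation is $M$-closed. $M_1\Rightarrow_{\mathsf{lex}}M_2$ means every finitely complete category with $M_1$-closed relations has $M_2$-closed relations. For integers $n,k\geq 2$, $\mathsf{Cube}_{n,k}$ is the simple extended matrix with $n$ rows and variables $\{x_1,\dots,x_k\}$ whose $k^n-1$ left columns are all the $n$-tuples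 of elements of $\{x_1,\dots,x_k\}$ except $(x_1,\dots,x_1)$, and whose right column is $(x_1,\dots,x_1)$. *)

theory Defs
  imports Main
begin

text \<open>A category whose objects are all elements of type 'o and whose morphisms
  are all elements of type 'm.  Composition cmp f g means f after g and is only
  meaningful when cod g = dom f.\<close>

record ('o, 'm) category =
  dom :: "'m \<Rightarrow> 'o"
  cod :: "'m \<Rightarrow> 'o"
  cmp :: "'m \<Rightarrow> 'm \<Rightarrow> 'm"
  ide :: "'o \<Rightarrow> 'm"

definition hom :: "('o, 'm) category \<Rightarrow> 'o \<Rightarrow> 'o \<Rightarrow> 'm set" where
  "hom C a b = {f. dom C f = a \<and> cod C f = b}"

definition is_category :: "('o, 'm) category \<Rightarrow> bool" where
  "is_category C \<longleftrightarrow>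
     (\<forall>a. ide C a \<in> hom C a a) \<and>
     (\<forall>f g. cod C g = dom C f \<longrightarrow> cmp C f g \<in> hom C (dom C g) (cod C f)) \<and>
     (\<forall>f. cmp C f (ide C (dom C f)) = f \<and> cmp C (ide C (cod C f)) f = f) \<and>
     (\<forall>f g h. cod C h = dom C g \<and> cod C g = dom C f \<longrightarrow>
         cmp C f (cmp C g h) = cmp C (cmp C f g) h)"

definition is_mono :: "('o, 'm) category \<Rightarrow> 'm \<Rightarrow> bool" where
  "is_mono C f \<longleftrightarrow>
     (\<forall>g h. cod C g = dom C f \<and> cod C h = dom C f \<and> dom C g = dom C h \<and>
        cmp C f g = cmp C f h \<longrightarrow> g = h)"

definition is_terminal :: "('o, 'm) category \<Rightarrow> 'o \<Rightarrow> bool" where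
  "is_terminal C t \<longleftrightarrow> (\<forall>a. \<exists>!f. f \<in> hom C a t)"

definition is_pullback ::
  "('o, 'm) category \<Rightarrow> 'm \<Rightarrow> 'm \<Rightarrow> 'o \<Rightarrow> 'm \<Rightarrow> 'm \<Rightarrow> bool" where
  "is_pullback C f g P p q \<longleftrightarrow>
     p \<in> hom C P (dom C f) \<and> q \<in> hom C P (dom C g) \<and> cmp C f p = cmp C g q \<and>
     (\<forall>X u v. u \<in> hom C X (dom C f) \<and> v \<in> hom C X (dom C g) \<and> cmp C f u = cmp C g v \<longrightarrow>
        (\<exists>!w. w \<in> hom C X P \<and> cmp C p w = u \<and> cmp C q w = v))"

text \<open>Finitely complete: a terminal object and all pullbacks
  (equivalent to having all finite limits).\<close>
definition finitely_complete :: "('o, 'm) category \<Rightarrow> bool" where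
  "finitely_complete C \<longleftrightarrow>
     (\<exists>t. is_terminal C t) \<and>
     (\<forall>f g. cod C f = cod C g \<longrightarrow> (\<exists>P p q. is_pullback C f g P p q))"

definition is_power :: "('o, 'm) category \<Rightarrow> 'o \<Rightarrow> nat \<Rightarrow> 'o \<Rightarrow> (nat \<Rightarrow> 'm) \<Rightarrow> bool" where
  "is_power C A n P p \<longleftrightarrow>
     (\<forall>i<n. p i \<in> hom C P A) \<and>
     (\<forall>B fs. (\<forall>i<n. fs i \<in> hom C B A) \<longrightarrow>
        (\<exists>!u. u \<in> hom C B P \<and> (\<forall>i<n. cmp C (p i) u = fs i)))"

definition factors_through ::
  "('o, 'm) category \<Rightarrow> nat \<Rightarrow> (nat \<Rightarrow> 'm) \<Rightarrow> 'm \<Rightarrow> 'o \<Rightarrow> (nat \<Rightarrow> 'm) \<Rightarrow> bool" where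
  "factors_through C n p r B fs \<longleftrightarrow>
     (\<exists>g. g \<in> hom C B (dom C r) \<and> (\<forall>i<n. cmp C (p i) (cmp C r g) = fs i))"

text \<open>C has M-closed relations, for the simple extended matrix M with n rows,
  m left columns and variables x_0, ..., x_(k-1) (0-indexed): entry x_{ij} is the
  variable with index X i j, entry y_i the variable with index Y i.\<close>
definition has_closed_relations ::
  "('o, 'm) category \<Rightarrow> nat \<Rightarrow> nat \<Rightarrow> nat \<Rightarrow> (nat \<Rightarrow> nat \<Rightarrow> nat) \<Rightarrow> (nat \<Rightarrow> nat) \<Rightarrow> bool" where
  "has_closed_relations C n m k X Y \<longleftrightarrow>
     (\<forall>A P p r. is_power C A n P p \<and> cod C r = P \<and> is_mono C r \<longrightarrow>
        (\<forall>B f. (\<forall>v<k. f v \<in> hom C B A) \<longrightarrow>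
           (\<forall>j<m. factors_through C n p r B (\<lambda>i. f (X i j))) \<longrightarrow>
           factors_through C n p r B (\<lambda>i. f (Y i))))"

text \<open>Cube_{n,k}: left column j (j < k^n - 1) is the tuple of base-k digits of j+1,
  which enumerates all n-tuples over {x_0..x_(k-1)} except (x_0,...,x_0);
  the right column is (x_0,...,x_0).\<close>
definition cube_left :: "nat \<Rightarrow> nat \<Rightarrow> nat \<Rightarrow> nat" where
  "cube_left k i j = ((j + 1) div k ^ i) mod k"

definition has_cube_closed_relations :: "('o, 'm) category \<Rightarrow> nat \<Rightarrow> nat \<Rightarrow> bool" where
  "has_cube_closed_relations C n k \<longleftrightarrow>
     has_closed_relations C n (k ^ n - 1) k (cube_left k) (\<lambda>i. 0)"

end

theory Submission
  imports Defs
begin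

text \<open>A map \<sigma> on variable indices that sends every left column of M to a left
  column of M' and the right column of M to that of M' turns M-closedness into
  M'-closedness: precompose the given morphisms with \<sigma>.  For the cubes, collapse
  every variable of Cube_{n,k2} outside {x_0..x_(k1-1)} onto x_1: this fixes x_0
  and keeps nonzero indices nonzero, hence maps the tuples other than
  (x_0,...,x_0) to tuples of the same kind.\<close>

lemma eq_0_if_digits_eq_0:
  fixes M k :: nat
  assumes "M < k ^ n" and "\<forall>i<n. M div k ^ i mod k = 0"
  shows "M = 0"
  using assms
proof (induction n arbitrary: M)
  case (Suc n)
  have "M div k < k ^ n"
    using Suc.prems(1) by (simp add: less_mult_imp_div_less mult.commute)
  moreover have "\<forall>i<n. M div k div k ^ i mod k = 0"
    using Suc.prems(2) by (metis Suc_mono div_mult2_eq power_Suc)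
  ultimately have "M div k = 0" by (rule Suc.IH)
  moreover have "M mod k = 0" using Suc.prems(2) by auto
  ultimately show ?case by (metis div_mult_mod_eq mult_0 add_0)
qed simp

lemma digits_of_sum_base:
  fixes k :: nat
  assumes "\<forall>i<n. t i < k"
  shows "(\<Sum>i<n. t i * k ^ i) < k ^ n \<and> (\<forall>i<n. (\<Sum>i<n. t i * k ^ i) div k ^ i mod k = t i)"
  using assms
proof (induction n arbitrary: t)
  case (Suc n)
  define S where "S = (\<Sum>i<n. t (Suc i) * k ^ i)"
  have IH: "S < k ^ n" "\<forall>i<n. S div k ^ i mod k = t (Suc i)"
    using Suc.IH[of "t \<circ> Suc"] Suc.prems by (auto simp: S_def)
  have split: "(\<Sum>i<Suc n. t i * k ^ i) = t 0 + k * S"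
    by (simp add: S_def sum.lessThan_Suc_shift sum_distrib_left mult.left_commute
        del: sum.lessThan_Suc)
  have t0: "t 0 < k" using Suc.prems by simp
  have "t 0 + k * S < k + k * S" using t0 by simp
  also have "\<dots> \<le> k ^ Suc n"
    using IH(1) by (metis mult_Suc_right add.commute Suc_le_eq mult_le_mono2 power_Suc)
  finally have bound: "t 0 + k * S < k ^ Suc n" .
  have "(t 0 + k * S) div k ^ i mod k = t i" if "i < Suc n" for i
  proof (cases i)
    case 0 then show ?thesis using t0 by simp
  next
    case (Suc i')
    have "(t 0 + k * S) div k = S" using t0 by simp
    then have "(t 0 + k * S) div k ^ i = S div k ^ i'"
      by (simp add: Suc div_mult2_eq)
    then show ?thesis using IH(2) Suc that by simp
  qed
  then show ?case using bound unfolding split by blast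
qed simp

lemma cube_left_nonzero:
  assumes "j < k ^ n - 1"
  shows "\<exists>i<n. cube_left k i j \<noteq> 0"
proof (rule ccontr)
  assume "\<not> ?thesis"
  moreover have "j + 1 < k ^ n" using assms by simp
  ultimately have "j + 1 = 0"
    using eq_0_if_digits_eq_0[of "j + 1" k n] by (simp add: cube_left_def)
  then show False by simp
qed

lemma cube_left_surj:
  assumes "\<forall>i<n. t i < k" and "\<exists>i<n. t i \<noteq> 0"
  shows "\<exists>j<k ^ n - 1. \<forall>i<n. cube_left k i j = t i"
proof -
  define N where "N = (\<Sum>i<n. t i * k ^ i)"
  have N: "N < k ^ n" "\<forall>i<n. N div k ^ i mod k = t i"
    using digits_of_sum_base[OF assms(1)] by (simp_all add: N_def)
  then have "N \<noteq> 0" using assms(2) by (metis div_0 mod_0)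
  then have "N - 1 < k ^ n - 1" and "\<forall>i<n. cube_left k i (N - 1) = t i"
    using N by (simp_all add: cube_left_def)
  then show ?thesis by blast
qed

lemma factors_through_cong:
  "(\<And>i. i < n \<Longrightarrow> fs i = gs i) \<Longrightarrow>
    factors_through C n p r B fs = factors_through C n p r B gs"
  unfolding factors_through_def by auto

lemma has_closed_relations_subst:
  assumes closed: "has_closed_relations C n m k X Y"
    and vars: "\<And>v. v < k \<Longrightarrow> \<sigma> v < k'"
    and left: "\<And>j. j < m \<Longrightarrow> \<exists>j'<m'. \<forall>i<n. X' i j' = \<sigma> (X i j)"
    and right: "\<And>i. i < n \<Longrightarrow> \<sigma> (Y i) = Y' i"
  shows "has_closed_relations C n m' k' X' Y'"
  unfolding has_closed_relations_def
proof (intro allI impI)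
  fix A P p r B f
  assume rel: "is_power C A n P p \<and> cod C r = P \<and> is_mono C r"
    and f: "\<forall>v<k'. f v \<in> hom C B A"
    and cols: "\<forall>j<m'. factors_through C n p r B (\<lambda>i. f (X' i j))"
  have "\<forall>v<k. (f \<circ> \<sigma>) v \<in> hom C B A" using f vars by simp
  moreover have "\<forall>j<m. factors_through C n p r B (\<lambda>i. (f \<circ> \<sigma>) (X i j))"
  proof (intro allI impI)
    fix j assume "j < m"
    then obtain j' where j': "j' < m'" "\<forall>i<n. X' i j' = \<sigma> (X i j)" using left by blast
    with cols have "factors_through C n p r B (\<lambda>i. f (X' i j'))" by blast
    moreover have "factors_through C n p r B (\<lambda>i. f (X' i j')) =
        factors_through C n p r B (\<lambda>i. (f \<circ> \<sigma>) (X i j))"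
      using j'(2) by (intro factors_through_cong) simp
    ultimately show "factors_through C n p r B (\<lambda>i. (f \<circ> \<sigma>) (X i j))" by simp
  qed
  ultimately have "factors_through C n p r B (\<lambda>i. (f \<circ> \<sigma>) (Y i))"
    using closed rel unfolding has_closed_relations_def by blast
  moreover have "factors_through C n p r B (\<lambda>i. (f \<circ> \<sigma>) (Y i)) =
      factors_through C n p r B (\<lambda>i. f (Y' i))"
    using right by (intro factors_through_cong) simp
  ultimately show "factors_through C n p r B (\<lambda>i. f (Y' i))" by simp
qed

lemma has_cube_closed_relations_change_arity:
  assumes "k1 \<ge> 2" and "has_cube_closed_relations C n k2"
  shows "has_cube_closed_relations C n k1"
proof -
  define \<sigma> where "\<sigma> v = (if v < k1 then v else 1)" for v :: nat
  have "\<exists>j'<k1 ^ n - 1. \<forall>i<n. cube_left k1 i j' = \<sigma> (cube_left k2 i j)"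
    if "j < k2 ^ n - 1" for j
  proof (rule cube_left_surj)
    show "\<forall>i<n. \<sigma> (cube_left k2 i j) < k1" using assms(1) by (simp add: \<sigma>_def)
    show "\<exists>i<n. \<sigma> (cube_left k2 i j) \<noteq> 0"
      using cube_left_nonzero[OF that] by (auto simp: \<sigma>_def)
  qed
  moreover have "\<sigma> v < k1" for v using assms(1) by (simp add: \<sigma>_def)
  ultimately show ?thesis
    using has_closed_relations_subst[of C n "k2 ^ n - 1" k2 "cube_left k2" "\<lambda>i. 0" \<sigma> k1]
      assms(1,2) unfolding has_cube_closed_relations_def by (auto simp: \<sigma>_def)
qed

theorem corollary2p2:
  fixes C :: "('o, 'm) category" and n k1 k2 :: nat
  assumes "n \<ge> 2" and "k1 \<ge> 2" and "k2 \<ge> 2"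
    and "is_category C" and "finitely_complete C"
  shows "has_cube_closed_relations C n k1 \<longleftrightarrow> has_cube_closed_relations C n k2"
  using has_cube_closed_relations_change_arity assms(2,3) by blast

end
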